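(* Let $d$ be even and $n\ge d+1$. Let $x_1,\dots,x_n\in\mathbb R^d$ be such that all maximal minors of the $(d+1)\times n$ matrix with columns $\binom{1}{x_1},\dots,\binom{1}{x_n}$ have the same (nonzero) sign, and let $P=\operatorname{conv}(x_1,\dots,x_n)$ (a cyclic $d$-polytope with $n$ vertices). Let $\pi\in S_n$ be such that $x_i\mapsto x_{\pi(i)}$ is a combinatorial automorphism of $P$. Then all maximal minors of the matrix with columns $\binom{1}{x_{\pi(1)}},\dots,\binom{1}{x_{\pi(n)}}$ also have the same sign.
   Context: A combinatorial automorphism of a polytope is a permutation of its vertices that induces an automorphism of its face lattice. *)

theory Defs
  imports "HOL-Analysis.Analysis"
begin

definition leibniz_det :: "nat \<Rightarrow> (nat \<Rightarrow> nat \<Rightarrow> real) \<Rightarrow> real" where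
  "leibniz_det k A = (\<Sum>p | p permutes {..<k}. of_int (sign p) * (\<Prod>i<k. A i (p i)))"

text \<open>A fixed enumeration of the coordinates of real^'d (row order; any choice only
  multiplies all maximal minors by the same sign).\<close>
definition coord_enum :: "nat \<Rightarrow> 'd::finite" where
  "coord_enum = (SOME e. bij_betw e {..<CARD('d)} (UNIV::'d set))"

definition lifted_entry :: "(nat \<Rightarrow> real ^ 'd::finite) \<Rightarrow> nat \<Rightarrow> nat \<Rightarrow> real" where
  "lifted_entry x i j = (if i = 0 then 1 else x j $ coord_enum (i - 1))"

definition max_minor :: "(nat \<Rightarrow> real ^ 'd::finite) \<Rightarrow> (nat \<Rightarrow> nat) \<Rightarrow> real" where
  "max_minor x c = leibniz_det (CARD('d) + 1) (\<lambda>i k. lifted_entry x i (c k))"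

definition minors_same_sign :: "nat \<Rightarrow> (nat \<Rightarrow> real ^ 'd::finite) \<Rightarrow> bool" where
  "minors_same_sign n x \<longleftrightarrow>
     (\<exists>s\<in>{-1, 1::real}. \<forall>c. strict_mono_on {..CARD('d)} c \<and> c (CARD('d)) < n
         \<longrightarrow> s * max_minor x c > 0)"

definition vertices_of :: "'a::real_normed_vector set \<Rightarrow> 'a set" where
  "vertices_of P = {v. v extreme_point_of P}"

definition comb_automorphism :: "'a::euclidean_space set \<Rightarrow> ('a \<Rightarrow> 'a) \<Rightarrow> bool" where
  "comb_automorphism P \<sigma> \<longleftrightarrow> polytope P \<and> bij_betw \<sigma> (vertices_of P) (vertices_of P) \<and>
     (\<forall>S \<subseteq> vertices_of P.
        (\<exists>F. F face_of P \<and> F \<inter> vertices_of P = S) \<longleftrightarrow>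
        (\<exists>G. G face_of P \<and> G \<inter> vertices_of P = \<sigma> ` S))"

end

theory Submission
  imports Defs "Jordan_Normal_Form.Determinant"
begin

(* Let F(i_0, ..., i_d) be the maximal minor of the lifted configuration with columns
   i_0, ..., i_d; it is alternating and satisfies the three-term Grassmann-Pluecker relations.
   Call S a pair union if it is obtained by repeatedly removing two elements that are
   consecutive among those left; for even d these are facets of the cyclic polytope (Gale's
   evenness criterion).  The key combinatorial fact: if, for every pair union L of size d, all
   F(L, j) with j outside L have the same sign, then F has constant sign on increasing index
   lists.  It follows by induction on d/2, contracting a consecutive pair, together with a
   descent on the sum of the indices: a Grassmann-Pluecker relation expresses a list without
   consecutive pair through lists of smaller sum or with a consecutive pair.
   For the relabelled configuration, the automorphism maps the face spanned by a pair union L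
   to a face, which is exposed because P is a polytope.  So the points indexed by pi(L) lie on a
   supporting hyperplane with all other points strictly on one side, which is the hypothesis of
   the key fact. *)

no_notation Matrix.scalar_prod (infix \<open>\<bullet>\<close> 70)

section \<open>Alternating forms satisfying the Grassmann-Pluecker relations\<close>

definition alternating_gp :: "nat \<Rightarrow> (nat list \<Rightarrow> real) \<Rightarrow> bool" where
  "alternating_gp k F \<longleftrightarrow>
    (\<forall>X Y a b. length X + length Y + 2 = k \<longrightarrow> F (X @ [a,b] @ Y) = - F (X @ [b,a] @ Y)) \<and>
    (\<forall>T a b c e. length T + 2 = k \<longrightarrow>
       F (T@[a,b]) * F (T@[c,e]) - F (T@[a,c]) * F (T@[b,e]) + F (T@[a,e]) * F (T@[b,c]) = 0)"

lemma alternating_gp_swap: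
  "alternating_gp k F \<Longrightarrow> length X + length Y + 2 = k \<Longrightarrow> F (X @ [a,b] @ Y) = - F (X @ [b,a] @ Y)"
  unfolding alternating_gp_def by blast

lemma alternating_gp_relation:
  "alternating_gp k F \<Longrightarrow> length T + 2 = k \<Longrightarrow>
     F (T@[a,b]) * F (T@[c,e]) - F (T@[a,c]) * F (T@[b,e]) + F (T@[a,e]) * F (T@[b,c]) = 0"
  unfolding alternating_gp_def by blast

lemma alternating_gp_contract:
  assumes "alternating_gp (Suc (Suc k)) F"
  shows "alternating_gp k (\<lambda>L. F (a # b # L))"
  unfolding alternating_gp_def
proof (intro conjI allI impI)
  fix X Y :: "nat list" and c e :: nat
  assume "length X + length Y + 2 = k"
  then show "F (a # b # X @ [c, e] @ Y) = - F (a # b # X @ [e, c] @ Y)"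
    using alternating_gp_swap[OF assms, of "a # b # X" Y c e] by simp
next
  fix T :: "nat list" and c1 c2 c3 c4 :: nat
  assume "length T + 2 = k"
  then show "F (a # b # T @ [c1, c2]) * F (a # b # T @ [c3, c4])
      - F (a # b # T @ [c1, c3]) * F (a # b # T @ [c2, c4])
      + F (a # b # T @ [c1, c4]) * F (a # b # T @ [c2, c3]) = 0"
    using alternating_gp_relation[OF assms, of "a # b # T"] by simp
qed

lemma alternating_gp_pair_to_front:
  assumes "alternating_gp k F" "length X + length Y + 2 = k"
  shows "F (X @ [a,b] @ Y) = F (a # b # X @ Y)"
  using assms(2)
proof (induction X arbitrary: Y rule: rev_induct)
  case Nil
  then show ?case by simp
next
  case (snoc x X)
  have l: "length X + length (x # Y) + 2 = k" using snoc.prems by simp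
  have "F ((X @ [x]) @ [a,b] @ Y) = F (X @ [x,a] @ (b # Y))" by simp
  also have "\<dots> = - F (X @ [a,x] @ (b # Y))"
    by (rule alternating_gp_swap[OF assms(1)]) (use l in simp)
  also have "X @ [a,x] @ (b # Y) = (X @ [a]) @ [x,b] @ Y" by simp
  also have "F \<dots> = - F ((X @ [a]) @ [b,x] @ Y)"
    by (rule alternating_gp_swap[OF assms(1)]) (use l in simp)
  also have "(X @ [a]) @ [b,x] @ Y = X @ [a,b] @ (x # Y)" by simp
  also have "F \<dots> = F (a # b # X @ x # Y)" by (rule snoc.IH[OF l])
  finally show ?case by simp
qed

lemma alternating_gp_abs_insort:
  assumes "alternating_gp k F" "length P + 1 + length M = k"
  shows "\<bar>F (P @ x # M)\<bar> = \<bar>F (P @ insort x M)\<bar>"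
  using assms(2)
proof (induction M arbitrary: P)
  case Nil
  then show ?case by simp
next
  case (Cons y M)
  show ?case
  proof (cases "x \<le> y")
    case True
    then show ?thesis by simp
  next
    case False
    have "F (P @ [x,y] @ M) = - F (P @ [y,x] @ M)"
      by (rule alternating_gp_swap[OF assms(1)]) (use Cons.prems in simp)
    then have "\<bar>F (P @ x # y # M)\<bar> = \<bar>F ((P @ [y]) @ x # M)\<bar>" by simp
    also have "\<dots> = \<bar>F ((P @ [y]) @ insort x M)\<bar>" by (rule Cons.IH) (use Cons.prems in simp)
    finally show ?thesis using False by simp
  qed
qed

lemma alternating_gp_abs_sort:
  assumes "alternating_gp k F" "length L = k"
  shows "\<bar>F L\<bar> = \<bar>F (sort L)\<bar>"
proof -
  have "\<bar>F (P @ L)\<bar> = \<bar>F (P @ sort L)\<bar>" if "length P + length L = k" for P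
    using that
  proof (induction L arbitrary: P)
    case Nil
    then show ?case by simp
  next
    case (Cons x L)
    have "\<bar>F (P @ x # L)\<bar> = \<bar>F ((P @ [x]) @ sort L)\<bar>"
      using Cons.IH[of "P @ [x]"] Cons.prems by simp
    also have "\<dots> = \<bar>F (P @ insort x (sort L))\<bar>"
      using alternating_gp_abs_insort[OF assms(1), of P "sort L" x] Cons.prems by simp
    finally show ?case by simp
  qed
  from this[of "[]"] assms(2) show ?thesis by simp
qed

lemma alternating_gp_three_term:
  assumes "alternating_gp k F" "length R + 3 = k"
  shows "F (a # p # q # R) * F (a # u # w # R)
       = F (a # u # p # R) * F (a # w # q # R) + F (a # p # w # R) * F (a # u # q # R)"
proof -
  define T where "T = a # R"
  have lT: "length T + 2 = k" using assms(2) by (simp add: T_def)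
  have front: "F (a # y # z # R) = F (T @ [y,z])" for y z
  proof -
    have "F ([a] @ [y,z] @ R) = F (y # z # [a] @ R)"
      by (rule alternating_gp_pair_to_front[OF assms(1)]) (use assms(2) in simp)
    moreover have "F (T @ [y,z] @ []) = F (y # z # T @ [])"
      by (rule alternating_gp_pair_to_front[OF assms(1)]) (use lT in simp)
    ultimately show ?thesis by (simp add: T_def)
  qed
  have swap: "F (T @ [y,z]) = - F (T @ [z,y])" for y z
    using alternating_gp_swap[OF assms(1), of T "[]" y z] lT by simp
  show ?thesis
    using alternating_gp_relation[OF assms(1) lT, of p q u w] swap[of p u] swap[of q w] swap[of q u]
    unfolding front by (simp add: algebra_simps)
qed

definition consecutive_in :: "nat set \<Rightarrow> nat \<Rightarrow> nat \<Rightarrow> bool" where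
  "consecutive_in E a b \<longleftrightarrow> a \<in> E \<and> b \<in> E \<and> a < b \<and> (\<forall>z\<in>E. \<not> (a < z \<and> z < b))"

inductive pair_union :: "nat set \<Rightarrow> nat set \<Rightarrow> bool" where
  empty: "pair_union E {}"
| step: "pair_union (E - {a,b}) S \<Longrightarrow> consecutive_in E a b \<Longrightarrow> pair_union E (insert a (insert b S))"

definition sorted_kset :: "nat set \<Rightarrow> nat \<Rightarrow> nat list \<Rightarrow> bool" where
  "sorted_kset E k L \<longleftrightarrow> sorted_wrt (<) L \<and> set L \<subseteq> E \<and> length L = k"

definition sign_constant :: "nat set \<Rightarrow> nat \<Rightarrow> (nat list \<Rightarrow> real) \<Rightarrow> bool" where
  "sign_constant E k F \<longleftrightarrow> (\<forall>L L'. sorted_kset E k L \<longrightarrow> sorted_kset E k L' \<longrightarrow> 0 < F L * F L')"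

definition pair_unions_are_facets :: "nat set \<Rightarrow> nat \<Rightarrow> (nat list \<Rightarrow> real) \<Rightarrow> bool" where
  "pair_unions_are_facets E k F \<longleftrightarrow>
    (\<forall>S L j j'. pair_union E S \<longrightarrow> sorted_wrt (<) L \<longrightarrow> set L = S \<longrightarrow> length L + 1 = k \<longrightarrow>
       j \<in> E - S \<longrightarrow> j' \<in> E - S \<longrightarrow> 0 < F (L @ [j]) * F (L @ [j']))"

lemma pos_mult_trans: "0 < x * y \<Longrightarrow> 0 < y * z \<Longrightarrow> 0 < x * (z::real)"
  unfolding zero_less_mult_iff by auto

lemma consecutive_in_unique: "consecutive_in E a b \<Longrightarrow> consecutive_in E a b' \<Longrightarrow> b = b'"
  unfolding consecutive_in_def by (metis linorder_neqE_nat)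

lemma consecutive_in_Max_less:
  assumes "finite E" "a \<in> E" "a < p" "p \<in> E"
  shows "consecutive_in E (Max {z\<in>E. z < p}) p" "a \<le> Max {z\<in>E. z < p}"
proof -
  have fin: "finite {z\<in>E. z < p}" and a: "a \<in> {z\<in>E. z < p}" using assms by auto
  show "a \<le> Max {z\<in>E. z < p}" using Max_ge[OF fin a] .
  have "Max {z\<in>E. z < p} \<in> {z\<in>E. z < p}" using Max_in[OF fin] a by blast
  then show "consecutive_in E (Max {z\<in>E. z < p}) p"
    unfolding consecutive_in_def using Max_ge[OF fin] assms(4) by fastforce
qed

lemma pair_union_subset: "pair_union E S \<Longrightarrow> S \<subseteq> E"
  by (induction rule: pair_union.induct) (auto simp: consecutive_in_def)

lemma pair_union_interval: "{a..<a+2*m} \<subseteq> E \<Longrightarrow> pair_union E {a..<a+2*m}"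
proof (induction m arbitrary: E)
  case 0
  then show ?case using pair_union.empty by simp
next
  case (Suc m)
  have "{a..<a+2*Suc m} = insert (a+2*m) (insert (a+2*m+1) {a..<a+2*m})" by auto
  moreover have "consecutive_in E (a+2*m) (a+2*m+1)" using Suc.prems
    by (auto simp: consecutive_in_def)
  moreover have "pair_union (E - {a+2*m, a+2*m+1}) {a..<a+2*m}"
    by (rule Suc.IH) (use Suc.prems in auto)
  ultimately show ?case by (simp add: pair_union.step)
qed

lemma sorted_split_at_consecutive:
  assumes "sorted_wrt (<) L" "set L \<subseteq> E" "consecutive_in E a b" "a \<in> set L" "b \<in> set L"
  obtains X Y where "L = X @ [a,b] @ Y"
proof -
  have "\<exists>X Y. L = X @ [a,b] @ Y" using assms
  proof (induction L)
    case Nil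
    then show ?case by simp
  next
    case (Cons x L)
    have ab: "a < b" and between: "\<forall>z\<in>set (x # L). \<not> (a < z \<and> z < b)"
      using Cons.prems(2,3) by (auto simp: consecutive_in_def)
    show ?case
    proof (cases "x = a")
      case True
      then obtain y L' where L: "L = y # L'" using Cons.prems(1,5) ab by (cases L) auto
      have "y = b" using Cons.prems(1,5) True L ab between by auto
      then show ?thesis using True L by (metis append_Cons append_Nil)
    next
      case False
      then have "x < a" "a \<in> set L" using Cons.prems(1,4) by auto
      then have "\<exists>X Y. L = X @ [a,b] @ Y" using Cons ab by auto
      then show ?thesis by (metis append_Cons)
    qed
  qed
  then show ?thesis using that by blast
qed

lemma sorted_insert_consecutive:
  assumes "consecutive_in E a b" "sorted_wrt (<) M" "set M \<subseteq> E - {a,b}"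
  obtains X Y where "M = X @ Y" "sorted_wrt (<) (X @ [a,b] @ Y)"
proof -
  define X where "X = filter (\<lambda>z. z < a) M"
  define Y where "Y = filter (\<lambda>z. b < z) M"
  have ab: "a < b" using assms(1) by (simp add: consecutive_in_def)
  have outside: "z < a \<or> b < z" if "z \<in> set M" for z
  proof -
    have "z \<in> E" "z \<noteq> a" "z \<noteq> b" using that assms(3) by auto
    then show ?thesis using assms(1) unfolding consecutive_in_def by (meson linorder_neqE_nat)
  qed
  have "M = X @ Y" unfolding X_def Y_def using assms(2) outside ab
  proof (induction M)
    case (Cons z M)
    show ?case
    proof (cases "z < a")
      case True
      then show ?thesis using Cons by auto
    next
      case False
      then have "b < z" using Cons.prems(2) by auto
      then have "\<forall>y\<in>set M. b < y" using Cons.prems(1) by auto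
      then have "filter (\<lambda>y. y < a) M = []" "filter (\<lambda>y. b < y) M = M"
        using ab by (auto simp: filter_empty_conv)
      then show ?thesis using False \<open>b < z\<close> by simp
    qed
  qed simp
  moreover have "sorted_wrt (<) (X @ [a,b] @ Y)"
    unfolding X_def Y_def using assms(2) ab by (auto simp: sorted_wrt_append sorted_wrt_filter)
  ultimately show ?thesis using that by blast
qed

lemma alternating_gp_extract_pair:
  assumes "alternating_gp k F" "consecutive_in E a b" "sorted_wrt (<) L" "set L \<subseteq> E"
    "a \<in> set L" "b \<in> set L" "length L + length Z = k"
  obtains M where "sorted_wrt (<) M" "set M = set L - {a,b}" "length M + 2 = length L"
    "F (L @ Z) = F (a # b # M @ Z)"
proof -
  obtain X Y where L: "L = X @ [a,b] @ Y" using sorted_split_at_consecutive assms(2-6) by blast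
  have "sorted_wrt (<) (X @ Y)" "set (X @ Y) = set L - {a,b}"
    using assms(3) unfolding L by (auto simp: sorted_wrt_append)
  moreover have "F (X @ [a,b] @ Y @ Z) = F (a # b # X @ Y @ Z)"
    by (rule alternating_gp_pair_to_front[OF assms(1)]) (use assms(7) L in simp)
  ultimately show ?thesis using that[of "X @ Y"] L by simp
qed

lemma sorted_kset_superset:
  assumes "finite E" "A \<subseteq> E" "card A \<le> k" "k \<le> card E"
  obtains L where "sorted_kset E k L" "A \<subseteq> set L"
proof -
  have "finite A" using assms(1,2) finite_subset by blast
  have "k - card A \<le> card (E - A)" using assms \<open>finite A\<close> by (simp add: card_Diff_subset)
  then obtain B where B: "B \<subseteq> E - A" "card B = k - card A" "finite B"
    by (rule obtain_subset_with_card_n)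
  have card: "card (A \<union> B) = k" using B \<open>finite A\<close> assms(3) by (subst card_Un_disjoint) auto
  obtain L where "sorted_wrt (<) L" "set L = A \<union> B" "length L = card (A \<union> B)"
    using finite_set_strict_sorted[of "A \<union> B"] \<open>finite A\<close> B(3) by auto
  then have "sorted_kset E k L" "A \<subseteq> set L" using B assms(2) card unfolding sorted_kset_def by auto
  then show ?thesis by (rule that)
qed

lemma sorted_kset_replace_second_third:
  assumes "sorted_kset E k (a # p # q # R)" "a < y" "y < z" "z \<le> q" "y \<in> E" "z \<in> E"
  shows "sorted_kset E k (a # y # z # R)"
  using assms unfolding sorted_kset_def by fastforce

lemma sign_constant_if_card_less: "card E < k \<Longrightarrow> finite E \<Longrightarrow> sign_constant E k F"
  unfolding sign_constant_def sorted_kset_def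
  by (metis card_mono distinct_card leD strict_sorted_iff)

lemma same_sign_three_term:
  fixes l b1 b2 b3 b4 b5 r :: real
  assumes "0 < b2 * r" "0 < b3 * r" "0 < b1 * r" "0 < b4 * r" "0 < b5 * r"
    "l * b1 = b2 * b3 + b4 * b5"
  shows "0 < l * r"
proof -
  have "(l * b1) * (r * r) = (b2 * b3 + b4 * b5) * (r * r)" by (simp only: assms(6))
  also have "\<dots> = (b2 * r) * (b3 * r) + (b4 * r) * (b5 * r)" by (simp add: algebra_simps)
  also have "\<dots> > 0" using assms(1,2,4,5) by (simp add: add_pos_pos)
  finally have "0 < l * b1" by (simp add: zero_less_mult_iff)
  then show ?thesis using assms(3) pos_mult_trans by blast
qed

lemma sign_constantD:
  "sign_constant E k F \<Longrightarrow> sorted_kset E k L \<Longrightarrow> sorted_kset E k L' \<Longrightarrow> 0 < F L * F L'"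
  unfolding sign_constant_def by blast

lemma pair_unions_are_facetsD:
  "pair_unions_are_facets E k F \<Longrightarrow> pair_union E S \<Longrightarrow> sorted_wrt (<) L \<Longrightarrow> set L = S \<Longrightarrow>
    length L + 1 = k \<Longrightarrow> j \<in> E - S \<Longrightarrow> j' \<in> E - S \<Longrightarrow> 0 < F (L @ [j]) * F (L @ [j'])"
  unfolding pair_unions_are_facets_def by blast

lemma same_sign_through_contraction:
  assumes "alternating_gp (Suc (Suc k)) F" "consecutive_in E a b"
    "sign_constant (E - {a,b}) k (\<lambda>L. F (a # b # L))"
    "sorted_kset E (Suc (Suc k)) L" "{a,b} \<subseteq> set L"
    "sorted_kset E (Suc (Suc k)) L'" "{a,b} \<subseteq> set L'"
  shows "0 < F L * F L'"
proof -
  have contract: "\<exists>M. sorted_kset (E - {a,b}) k M \<and> F L = F (a # b # M)"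
    if L: "sorted_kset E (Suc (Suc k)) L" and ab: "{a,b} \<subseteq> set L" for L
  proof -
    have L: "sorted_wrt (<) L" "set L \<subseteq> E" "length L = Suc (Suc k)"
      using L unfolding sorted_kset_def by auto
    obtain M where "sorted_wrt (<) M" "set M = set L - {a,b}" "length M + 2 = length L"
      "F (L @ []) = F (a # b # M @ [])"
      using alternating_gp_extract_pair[OF assms(1,2) L(1,2), of "[]"] ab L(3) by auto
    then show ?thesis using L unfolding sorted_kset_def by auto
  qed
  obtain M where "sorted_kset (E - {a,b}) k M" "F L = F (a # b # M)"
    using contract[OF assms(4,5)] by blast
  moreover obtain M' where "sorted_kset (E - {a,b}) k M'" "F L' = F (a # b # M')"
    using contract[OF assms(6,7)] by blast
  ultimately show ?thesis using sign_constantD[OF assms(3)] by simp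
qed

lemma pair_unions_are_facets_contract:
  assumes "alternating_gp (Suc (Suc k)) F" "consecutive_in E a b"
    "pair_unions_are_facets E (Suc (Suc k)) F"
  shows "pair_unions_are_facets (E - {a,b}) k (\<lambda>L. F (a # b # L))"
  unfolding pair_unions_are_facets_def
proof (intro allI impI)
  fix S L j j'
  assume S: "pair_union (E - {a,b}) S" and L: "sorted_wrt (<) L" "set L = S" "length L + 1 = k"
    and j: "j \<in> E - {a,b} - S" "j' \<in> E - {a,b} - S"
  have LE: "set L \<subseteq> E - {a,b}" using pair_union_subset[OF S] L(2) by simp
  obtain X Y where XY: "L = X @ Y" "sorted_wrt (<) (X @ [a,b] @ Y)"
    using sorted_insert_consecutive[OF assms(2) L(1) LE] .
  have front: "F (X @ [a,b] @ Y @ [i]) = F (a # b # L @ [i])" for i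
    using alternating_gp_pair_to_front[OF assms(1), of X "Y @ [i]"] XY(1) L(3) by simp
  have "0 < F ((X @ [a,b] @ Y) @ [j]) * F ((X @ [a,b] @ Y) @ [j'])"
  proof (rule pair_unions_are_facetsD[OF assms(3) pair_union.step[OF S assms(2)] XY(2)])
    show "set (X @ [a,b] @ Y) = insert a (insert b S)" using XY(1) L(2) by auto
  qed (use XY(1) L(3) j in auto)
  then show "0 < F (a # b # L @ [j]) * F (a # b # L @ [j'])" using front by simp
qed

lemma pair_union_sign:
  assumes "pair_union E S" "alternating_gp k F" "\<And>M. sorted_kset E k M \<Longrightarrow> 0 < c * F M"
    "sorted_wrt (<) L" "set L = S" "length L + 1 = k" "j \<in> E - S"
  shows "0 < c * F (L @ [j])"
  using assms
proof (induction arbitrary: k F L rule: pair_union.induct)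
  case (empty E)
  then have "L = []" "k = 1" by auto
  then show ?case using empty.prems(2)[of "[j]"] empty.prems(6) by (simp add: sorted_kset_def)
next
  case (step E a b S)
  have S: "S \<subseteq> E - {a,b}" using pair_union_subset[OF step.hyps(1)] .
  have ab: "a \<in> E" "b \<in> E" using step.hyps(2) by (auto simp: consecutive_in_def)
  obtain M where M: "sorted_wrt (<) M" "set M = set L - {a,b}" "length M + 2 = length L"
    "F (L @ [j]) = F (a # b # M @ [j])"
    using alternating_gp_extract_pair[OF step.prems(1) step.hyps(2) step.prems(3), of "[j]"]
      step.prems(4,5) S ab by auto
  define k' where "k' = Suc (length M)"
  have k: "k = Suc (Suc k')" using M(3) step.prems(5) by (simp add: k'_def)
  have contracted_pos: "0 < c * F (a # b # N)" if "sorted_kset (E - {a,b}) k' N" for N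
  proof -
    have N: "sorted_wrt (<) N" "set N \<subseteq> E - {a,b}" "length N = k'"
      using that unfolding sorted_kset_def by auto
    obtain X Y where XY: "N = X @ Y" "sorted_wrt (<) (X @ [a,b] @ Y)"
      using sorted_insert_consecutive[OF step.hyps(2) N(1,2)] .
    have "sorted_kset E k (X @ [a,b] @ Y)" using XY N ab k unfolding sorted_kset_def by auto
    then have "0 < c * F (X @ [a,b] @ Y)" by (rule step.prems(2))
    moreover have "F (X @ [a,b] @ Y) = F (a # b # N)"
      using alternating_gp_pair_to_front[OF step.prems(1), of X Y] XY(1) N(3) k by simp
    ultimately show ?thesis by simp
  qed
  have "set M = S" using M(2) step.prems(4) S by auto
  have "0 < c * F (a # b # M @ [j])"
    by (rule step.IH[of k' "\<lambda>L. F (a # b # L)" M,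
          OF alternating_gp_contract[OF step.prems(1)[unfolded k]] contracted_pos M(1) \<open>set M = S\<close>])
      (use M(3) step.prems(5,6) k'_def in auto)
  then show ?case using M(4) by simp
qed

context
  fixes E :: "nat set" and k :: nat and F :: "nat list \<Rightarrow> real"
  assumes gp: "alternating_gp k F" and fin: "finite E" and k3: "3 \<le> k" and kE: "k \<le> card E"
    and pair_coherent: "\<And>a b L L'. consecutive_in E a b \<Longrightarrow> sorted_kset E k L \<Longrightarrow> {a,b} \<subseteq> set L
      \<Longrightarrow> sorted_kset E k L' \<Longrightarrow> {a,b} \<subseteq> set L' \<Longrightarrow> 0 < F L * F L'"
begin

lemma sign_eq_first_pair_if_consecutive:
  assumes M: "sorted_kset E k M" "consecutive_in E (Min E) b0" "{Min E, b0} \<subseteq> set M"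
  shows "consecutive_in E a b \<Longrightarrow> sorted_kset E k L \<Longrightarrow> {a,b} \<subseteq> set L \<Longrightarrow> 0 < F L * F M"
proof (induction a arbitrary: b L rule: less_induct)
  case (less a)
  show ?case
  proof (cases "a = Min E")
    case True
    then have "b = b0" using consecutive_in_unique less.prems(1) M(2) by blast
    then show ?thesis using pair_coherent[OF less.prems M(1)] M(3) True by simp
  next
    case False
    have "a \<in> E" using less.prems(1) by (simp add: consecutive_in_def)
    then have "Min E \<in> E" using fin Min_in by blast
    have "Min E < a" using Min_le[OF fin \<open>a \<in> E\<close>] False by simp
    define a' where "a' = Max {z \<in> E. z < a}"
    have a': "consecutive_in E a' a"
      unfolding a'_def by (rule consecutive_in_Max_less(1)[OF fin \<open>Min E \<in> E\<close> \<open>Min E < a\<close> \<open>a \<in> E\<close>])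
    have "{a', a, b} \<subseteq> E" using a' less.prems(1) by (simp add: consecutive_in_def)
    moreover have "card {a', a, b} \<le> k" using k3 by (simp add: card_insert_if)
    ultimately obtain L3 where L3: "sorted_kset E k L3" "{a', a, b} \<subseteq> set L3"
      using sorted_kset_superset[OF fin _ _ kE] by blast
    have "a' < a" using a' by (simp add: consecutive_in_def)
    then have "0 < F L3 * F M" using less.IH a' L3 by simp
    moreover have "0 < F L * F L3" using pair_coherent[OF less.prems L3(1)] L3(2) by simp
    ultimately show ?thesis using pos_mult_trans by blast
  qed
qed

lemma sign_eq_first_pair:
  assumes M: "sorted_kset E k M" "consecutive_in E (Min E) b0" "{Min E, b0} \<subseteq> set M"
  shows "sorted_kset E k L \<Longrightarrow> 0 < F L * F M"
proof (induction L rule: measure_induct_rule[where f = sum_list])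
  case (less L)
  show ?case
  proof (cases "\<exists>a b. consecutive_in E a b \<and> {a,b} \<subseteq> set L")
    case True
    then show ?thesis using sign_eq_first_pair_if_consecutive[OF M _ less.prems] by blast
  next
    case no_pair: False
    have "Suc (Suc (Suc 0)) \<le> length L" using less.prems k3 by (simp add: sorted_kset_def)
    then obtain a p q R where L: "L = a # p # q # R" by (auto simp: Suc_le_length_iff)
    have ord: "a < p" "p < q" and inE: "a \<in> E" "p \<in> E" "q \<in> E"
      using less.prems unfolding sorted_kset_def L by auto
    define u where "u = Max {z \<in> E. z < p}"
    define w where "w = Max {z \<in> E. z < q}"
    have u: "consecutive_in E u p" "a \<le> u" and w: "consecutive_in E w q" "p \<le> w"
      using consecutive_in_Max_less[OF fin inE(1) ord(1) inE(2)]
        consecutive_in_Max_less[OF fin inE(2) ord(2) inE(3)] unfolding u_def w_def by auto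
    have "a \<noteq> u" "p \<noteq> w" using no_pair u(1) w(1) unfolding L by auto
    then have "a < u" "p < w" using u(2) w(2) by simp_all
    have uw: "u \<in> E" "u < p" "w \<in> E" "w < q" using u(1) w(1) by (auto simp: consecutive_in_def)
    note B = sorted_kset_replace_second_third[OF less.prems[unfolded L]]
    have smaller: "0 < F (a # y # z # R) * F M"
      if "a < y" "y < z" "z \<le> q" "y \<in> E" "z \<in> E" "y + z < p + q" for y z
      using less.IH[of "a # y # z # R"] B[OF that(1-5)] that(6) unfolding L by simp
    have "0 < F (a # u # p # R) * F M"
      by (rule sign_eq_first_pair_if_consecutive[OF M u(1) B])
        (use \<open>a < u\<close> uw(1,2) ord(2) inE(2) in simp_all)
    moreover have "0 < F (a # w # q # R) * F M"
      by (rule sign_eq_first_pair_if_consecutive[OF M w(1) B])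
        (use \<open>p < w\<close> uw(3,4) ord inE(3) in simp_all)
    moreover have "0 < F (a # u # w # R) * F M"
      by (rule smaller) (use \<open>a < u\<close> \<open>p < w\<close> uw in simp_all)
    moreover have "0 < F (a # p # w # R) * F M"
      by (rule smaller) (use \<open>p < w\<close> uw ord inE in simp_all)
    moreover have "0 < F (a # u # q # R) * F M"
      by (rule smaller) (use \<open>a < u\<close> uw ord inE in simp_all)
    moreover have "F L * F (a # u # w # R)
        = F (a # u # p # R) * F (a # w # q # R) + F (a # p # w # R) * F (a # u # q # R)"
      unfolding L
        by (rule alternating_gp_three_term[OF gp]) (use less.prems in \<open>simp add: L sorted_kset_def\<close>)
    ultimately show ?thesis by (rule same_sign_three_term)
  qed
qed

lemma sign_constant_if_pair_coherent: "sign_constant E k F"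
proof -
  have "E \<noteq> {}" using k3 kE by auto
  then have "Min E \<in> E" using fin by simp
  then have "card (E - {Min E}) = card E - 1" using fin by simp
  moreover have "card E - 1 \<noteq> 0" using k3 kE by simp
  ultimately have "E - {Min E} \<noteq> {}" by (metis card.empty)
  define b0 where "b0 = Min (E - {Min E})"
  have "Min E < b0" and b0: "b0 \<in> E" using Min_in[of "E - {Min E}"] fin \<open>E - {Min E} \<noteq> {}\<close>
    by (auto simp: b0_def order.not_eq_order_implies_strict)
  have "b0 \<le> z" if "z \<in> E" "z \<noteq> Min E" for z using that fin by (simp add: b0_def)
  then have first: "consecutive_in E (Min E) b0"
    unfolding consecutive_in_def using \<open>Min E \<in> E\<close> b0 \<open>Min E < b0\<close> by force
  have "{Min E, b0} \<subseteq> E" using \<open>Min E \<in> E\<close> b0 by simp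
  moreover have "card {Min E, b0} \<le> k" using \<open>Min E < b0\<close> k3 by simp
  ultimately obtain M where M: "sorted_kset E k M" "{Min E, b0} \<subseteq> set M"
    using sorted_kset_superset[OF fin _ _ kE] by blast
  have "0 < F L * F M" if "sorted_kset E k L" for L
    using sign_eq_first_pair[OF M(1) first M(2) that] .
  then show ?thesis
    unfolding sign_constant_def using pos_mult_trans by (metis mult.commute)
qed

end

theorem sign_constant_if_pair_unions_are_facets:
  assumes "alternating_gp (2*m+1) F" "finite E" "pair_unions_are_facets E (2*m+1) F"
  shows "sign_constant E (2*m+1) F"
  using assms
proof (induction m arbitrary: E F)
  case 0
  have "0 < F ([] @ [j]) * F ([] @ [j'])" if "j \<in> E" "j' \<in> E" for j j'
    using pair_unions_are_facetsD[OF "0.prems"(3) pair_union.empty] that by simp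
  then show ?case unfolding sign_constant_def sorted_kset_def
    by (auto simp: length_Suc_conv)
next
  case (Suc m)
  have gp: "alternating_gp (Suc (Suc (2*m+1))) F" using Suc.prems(1) by simp
  have coherent: "0 < F L * F L'"
    if "consecutive_in E a b" "sorted_kset E (2 * Suc m + 1) L" "{a,b} \<subseteq> set L"
      "sorted_kset E (2 * Suc m + 1) L'" "{a,b} \<subseteq> set L'" for a b L L'
  proof (rule same_sign_through_contraction[OF gp that(1)])
    show "sign_constant (E - {a,b}) (2*m+1) (\<lambda>L. F (a # b # L))"
      using Suc.IH[OF alternating_gp_contract[OF gp]] Suc.prems(2)
        pair_unions_are_facets_contract[OF gp that(1)] Suc.prems(3) by simp
  qed (use that in simp_all)
  show ?case
  proof (cases "2 * Suc m + 1 \<le> card E")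
    case True
    show ?thesis
      by (rule sign_constant_if_pair_coherent[OF Suc.prems(1,2) _ True coherent]) simp_all
  next
    case False
    then show ?thesis using sign_constant_if_card_less Suc.prems(2) by simp
  qed
qed

section \<open>Determinants of lists of columns\<close>

definition cols_mat :: "nat \<Rightarrow> real Matrix.vec list \<Rightarrow> real mat" where
  "cols_mat K cs = Matrix.mat K K (\<lambda>(i,j). (cs ! j) $ i)"

definition det_cols :: "nat \<Rightarrow> real Matrix.vec list \<Rightarrow> real" where
  "det_cols K cs = Determinant.det (cols_mat K cs)"

lemma cols_mat_carrier [simp]: "cols_mat K cs \<in> carrier_mat K K"
  unfolding cols_mat_def by simp

lemma cols_mat_mult_vec:
  assumes "v \<in> carrier_vec K" "i < K"
  shows "(cols_mat K cs *\<^sub>v v) $ i = (\<Sum>j<K. (cs ! j) $ i * v $ j)"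
  using assms by (simp add: cols_mat_def scalar_prod_def Matrix.row_def atLeast0LessThan)

lemma det_cols_swap:
  assumes "length cs = K" "i < K" "j < K" "i \<noteq> j"
  shows "det_cols K (cs[i := cs ! j, j := cs ! i]) = - det_cols K cs"
proof -
  have "cols_mat K (cs[i := cs ! j, j := cs ! i]) = swapcols i j (cols_mat K cs)"
    by (rule eq_matI) (use assms in \<open>auto simp: cols_mat_def mat_swapcols_def nth_list_update\<close>)
  then show ?thesis
    unfolding det_cols_def using det_swapcols[OF assms(2-4) cols_mat_carrier] by simp
qed

lemma det_cols_swap_adjacent:
  assumes "length X + length Y + 2 = K"
  shows "det_cols K (X @ [a,b] @ Y) = - det_cols K (X @ [b,a] @ Y)"
proof -
  let ?cs = "X @ [b,a] @ Y"
  have "?cs[length X := ?cs ! Suc (length X), Suc (length X) := ?cs ! length X] = X @ [a,b] @ Y"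
    by (simp add: list_update_append nth_append)
  then show ?thesis using det_cols_swap[of ?cs K "length X" "Suc (length X)"] assms by simp
qed

lemma det_cols_repeated:
  assumes "length cs = K" "i < K" "j < K" "i \<noteq> j" "cs ! i = cs ! j"
  shows "det_cols K cs = 0"
proof -
  have "col (cols_mat K cs) i = col (cols_mat K cs) j"
    by (rule eq_vecI) (use assms in \<open>auto simp: cols_mat_def col_def\<close>)
  then show ?thesis
    unfolding det_cols_def using det_identical_columns[OF cols_mat_carrier assms(4,2,3)] by simp
qed

lemma det_cols_linear:
  assumes "length cs = K" "k < K"
  obtains C where "\<And>b. det_cols K (cs[k := b]) = (\<Sum>i<K. b $ i * C i)"
proof
  fix b
  let ?A = "cols_mat K (cs[k := b])"
  have "det_cols K (cs[k := b]) = (\<Sum>i<K. ?A $$ (i,k) * cofactor ?A i k)"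
    unfolding det_cols_def by (rule laplace_expansion_column[OF cols_mat_carrier assms(2)])
  also have "\<dots> = (\<Sum>i<K. b $ i * cofactor (cols_mat K cs) i k)"
  proof (rule sum.cong[OF refl])
    fix i assume i: "i \<in> {..<K}"
    have "mat_delete ?A i k = mat_delete (cols_mat K cs) i k"
      by (rule eq_matI) (use assms i in \<open>auto simp: cols_mat_def mat_delete_def nth_list_update\<close>)
    then show "?A $$ (i,k) * cofactor ?A i k = b $ i * cofactor (cols_mat K cs) i k"
      using assms i by (simp add: cofactor_def cols_mat_def)
  qed
  finally show "det_cols K (cs[k := b]) = (\<Sum>i<K. b $ i * cofactor (cols_mat K cs) i k)" .
qed

lemma det_cols_update_lincomb:
  assumes "length X = K" "k < K" "v \<in> carrier_vec K"
  shows "det_cols K (X[k := cols_mat K cs *\<^sub>v v]) = (\<Sum>j<K. v $ j * det_cols K (X[k := cs ! j]))"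
proof -
  obtain C where C: "\<And>b. det_cols K (X[k := b]) = (\<Sum>i<K. b $ i * C i)"
    using det_cols_linear[OF assms(1,2)] by blast
  have "det_cols K (X[k := cols_mat K cs *\<^sub>v v]) = (\<Sum>i<K. (\<Sum>j<K. (cs ! j) $ i * v $ j) * C i)"
    unfolding C by (rule sum.cong) (simp_all add: cols_mat_mult_vec[OF assms(3)])
  also have "\<dots> = (\<Sum>i<K. \<Sum>j<K. v $ j * ((cs ! j) $ i * C i))"
    by (simp add: sum_distrib_left sum_distrib_right mult_ac)
  also have "\<dots> = (\<Sum>j<K. v $ j * (\<Sum>i<K. (cs ! j) $ i * C i))"
    by (subst sum.swap) (simp add: sum_distrib_left)
  also have "\<dots> = (\<Sum>j<K. v $ j * det_cols K (X[k := cs ! j]))" unfolding C ..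
  finally show ?thesis .
qed

lemma det_cols_solve:
  assumes "det_cols K cs \<noteq> 0" "b \<in> carrier_vec K"
  obtains v where "v \<in> carrier_vec K" "cols_mat K cs *\<^sub>v v = b"
proof
  let ?A = "cols_mat K cs"
  let ?d = "Determinant.det ?A"
  note adj = adj_mat[OF cols_mat_carrier[of K cs]]
  show "(1 / ?d) \<cdot>\<^sub>v (adj_mat ?A *\<^sub>v b) \<in> carrier_vec K" using adj assms by auto
  have "?A *\<^sub>v ((1 / ?d) \<cdot>\<^sub>v (adj_mat ?A *\<^sub>v b)) = (1 / ?d) \<cdot>\<^sub>v (?A *\<^sub>v (adj_mat ?A *\<^sub>v b))"
    by (rule mult_mat_vec[OF cols_mat_carrier]) (use adj assms in auto)
  also have "?A *\<^sub>v (adj_mat ?A *\<^sub>v b) = (?A * adj_mat ?A) *\<^sub>v b"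
    by (rule assoc_mult_mat_vec[symmetric, OF cols_mat_carrier adj(1) assms(2)])
  also have "\<dots> = ?d \<cdot>\<^sub>v b" unfolding adj(2) using assms by auto
  finally show "?A *\<^sub>v ((1 / ?d) \<cdot>\<^sub>v (adj_mat ?A *\<^sub>v b)) = b"
    using assms by (auto simp: det_cols_def smult_smult_assoc)
qed

lemma det_cols_cramer:
  assumes "length cs = K" "k < K" "v \<in> carrier_vec K"
  shows "det_cols K (cs[k := cols_mat K cs *\<^sub>v v]) = v $ k * det_cols K cs"
proof -
  have "replace_col (cols_mat K cs) (cols_mat K cs *\<^sub>v v) k
      = cols_mat K (cs[k := cols_mat K cs *\<^sub>v v])"
    by (rule eq_matI) (use assms in \<open>auto simp: cols_mat_def replace_col_def nth_list_update\<close>)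
  then show ?thesis
    using cramer_lemma_mat[OF cols_mat_carrier[of K cs] assms(3,2)] unfolding det_cols_def by simp
qed

text \<open>Writing \<open>b\<close> in the basis \<open>T @ [a,c]\<close> reduces the relation to the coordinates of
  \<open>b\<close> at \<open>a\<close> and \<open>c\<close>.\<close>
lemma det_cols_gp_nonzero:
  assumes "length T + 2 = K" "b \<in> carrier_vec K" "det_cols K (T @ [a,c]) \<noteq> 0"
  shows "det_cols K (T @ [a,b]) * det_cols K (T @ [c,e])
       - det_cols K (T @ [a,c]) * det_cols K (T @ [b,e])
       + det_cols K (T @ [a,e]) * det_cols K (T @ [b,c]) = 0"
proof -
  define n where "n = length T"
  define W where "W = T @ [a,c]"
  define V where "V = T @ [a,e]"
  have lW: "length W = K" and lV: "length V = K" and nK: "Suc n < K"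
    using assms(1) by (simp_all add: W_def V_def n_def)
  obtain v where v: "v \<in> carrier_vec K" "cols_mat K W *\<^sub>v v = b"
    using det_cols_solve[OF assms(3)[folded W_def] assms(2)] by blast
  have ab: "det_cols K (T @ [a,b]) = v $ Suc n * det_cols K W"
    using det_cols_cramer[OF lW nK v(1)] unfolding v(2)
      by (simp add: W_def n_def list_update_append)
  have bc: "det_cols K (T @ [b,c]) = v $ n * det_cols K W"
    using det_cols_cramer[OF lW _ v(1), of n] nK unfolding v(2)
    by (simp add: W_def n_def list_update_append)
  have "det_cols K (T @ [b,e]) = (\<Sum>j<K. v $ j * det_cols K (V[n := W ! j]))"
    using det_cols_update_lincomb[OF lV _ v(1), of n W] nK unfolding v(2)
    by (simp add: V_def n_def list_update_append)
  also have "\<dots> = v $ n * det_cols K V + v $ Suc n * det_cols K (T @ [c,e])"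
  proof -
    have K: "{..<K} = insert (Suc n) (insert n {..<n})" using assms(1) n_def by auto
    have "det_cols K (V[n := W ! j]) = 0" if "j < n" for j
      by (rule det_cols_repeated[of _ K j n])
        (use that nK lV in \<open>simp_all add: V_def W_def n_def nth_append nth_list_update\<close>)
    then show ?thesis unfolding K
      by (simp add: V_def W_def n_def list_update_append nth_append)
  qed
  finally show ?thesis using ab bc by (simp add: V_def W_def algebra_simps)
qed

lemma det_cols_gp:
  assumes "length T + 2 = K" "b \<in> carrier_vec K"
  shows "det_cols K (T @ [a,b]) * det_cols K (T @ [c,e])
       - det_cols K (T @ [a,c]) * det_cols K (T @ [b,e])
       + det_cols K (T @ [a,e]) * det_cols K (T @ [b,c]) = 0"
proof -
  have swap: "det_cols K (T @ [x,y]) = - det_cols K (T @ [y,x])" for x y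
    using det_cols_swap_adjacent[of T "[]" K x y] assms(1) by simp
  consider "det_cols K (T @ [a,c]) \<noteq> 0" | "det_cols K (T @ [a,e]) \<noteq> 0"
    | "det_cols K (T @ [c,e]) \<noteq> 0"
    | "det_cols K (T @ [a,c]) = 0" "det_cols K (T @ [a,e]) = 0" "det_cols K (T @ [c,e]) = 0"
    by blast
  then show ?thesis
  proof cases
    case 1
    then show ?thesis by (rule det_cols_gp_nonzero[OF assms])
  next
    case 2
    then show ?thesis
      using det_cols_gp_nonzero[OF assms, of a e c] swap[of e c] by (simp add: algebra_simps)
  next
    case 3
    then show ?thesis
      using det_cols_gp_nonzero[OF assms, of c e a]
        swap[of e a] swap[of c b] swap[of b a] swap[of c a]
      by (simp add: algebra_simps)
  next
    case 4
    then show ?thesis using swap[of c e] by simp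
  qed
qed

lemma alternating_gp_det_cols:
  assumes "\<And>i. f i \<in> carrier_vec K"
  shows "alternating_gp K (\<lambda>L. det_cols K (map f L))"
  unfolding alternating_gp_def
proof (intro conjI allI impI)
  fix X Y :: "nat list" and a b :: nat
  assume "length X + length Y + 2 = K"
  then show "det_cols K (map f (X @ [a,b] @ Y)) = - det_cols K (map f (X @ [b,a] @ Y))"
    using det_cols_swap_adjacent[of "map f X" "map f Y" K "f a" "f b"] by simp
next
  fix T :: "nat list" and a b c e :: nat
  assume "length T + 2 = K"
  then show "det_cols K (map f (T @ [a,b])) * det_cols K (map f (T @ [c,e]))
      - det_cols K (map f (T @ [a,c])) * det_cols K (map f (T @ [b,e]))
      + det_cols K (map f (T @ [a,e])) * det_cols K (map f (T @ [b,c])) = 0"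
    using det_cols_gp[of "map f T" K "f b" "f a" "f c" "f e"] assms by simp
qed

section \<open>Maximal minors of lifted point configurations\<close>

lemma coord_enum_bij: "bij_betw (coord_enum :: nat \<Rightarrow> 'd::finite) {..<CARD('d)} UNIV"
proof -
  have "\<exists>e. bij_betw e {..<CARD('d)} (UNIV :: 'd set)"
    using ex_bij_betw_nat_finite[of "UNIV :: 'd set"] by (auto simp: atLeast0LessThan)
  then show ?thesis unfolding coord_enum_def by (rule someI_ex)
qed

definition lift :: "real ^ 'd::finite \<Rightarrow> real Matrix.vec" where
  "lift z = Matrix.vec (CARD('d) + 1) (\<lambda>i. if i = 0 then 1 else z $ coord_enum (i - 1))"

lemma lift_carrier [simp]: "lift (z :: real ^ 'd::finite) \<in> carrier_vec (CARD('d) + 1)"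
  unfolding lift_def by simp

lemma lift_0 [simp]: "lift z $ 0 = 1"
  unfolding lift_def by simp

lemma lift_Suc: "r < CARD('d) \<Longrightarrow> lift (z :: real ^ 'd::finite) $ Suc r = z $ coord_enum r"
  unfolding lift_def by simp

definition lifted_det :: "(nat \<Rightarrow> real ^ 'd::finite) \<Rightarrow> nat list \<Rightarrow> real" where
  "lifted_det x L = det_cols (CARD('d) + 1) (map (lift \<circ> x) L)"

lemma alternating_gp_lifted_det:
  "alternating_gp (CARD('d) + 1) (lifted_det (x :: nat \<Rightarrow> real ^ 'd::finite))"
  unfolding lifted_det_def[abs_def]
  by (rule alternating_gp_det_cols) (simp only: comp_apply lift_carrier)

lemma lifted_det_snoc:
  "lifted_det x (L @ [j]) = det_cols (CARD('d) + 1) (map lift (map x L) @ [lift (x j)])"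
  for x :: "nat \<Rightarrow> real ^ 'd::finite"
  by (simp add: lifted_det_def)

lemma max_minor_eq_lifted_det:
  "max_minor (x :: nat \<Rightarrow> real ^ 'd::finite) c = lifted_det x (map c [0..<CARD('d) + 1])"
proof -
  let ?K = "CARD('d) + 1"
  have "Matrix.mat ?K ?K (\<lambda>(i,j). lifted_entry x i (c j))
      = cols_mat ?K (map (lift \<circ> x) (map c [0..<?K]))"
  proof (rule eq_matI)
    fix i j assume "i < dim_row (cols_mat ?K (map (lift \<circ> x) (map c [0..<?K])))"
      "j < dim_col (cols_mat ?K (map (lift \<circ> x) (map c [0..<?K])))"
    then have ij: "i < ?K" "j < ?K" by (simp_all add: cols_mat_def)
    then have "map (lift \<circ> x) (map c [0..<?K]) ! j = lift (x (c j))" by (simp del: upt_Suc)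
    then show "Matrix.mat ?K ?K (\<lambda>(i,j). lifted_entry x i (c j)) $$ (i, j)
        = cols_mat ?K (map (lift \<circ> x) (map c [0..<?K])) $$ (i, j)"
      using ij by (simp add: cols_mat_def lifted_entry_def lift_def del: upt_Suc)
  qed (simp_all add: cols_mat_def)
  moreover have "leibniz_det ?K A = Determinant.det (Matrix.mat ?K ?K (\<lambda>(i,j). A i j))" for A
    by (simp add: leibniz_det_def Determinant.det_def atLeast0LessThan)
  ultimately show ?thesis unfolding max_minor_def lifted_det_def det_cols_def by simp
qed

lemma sorted_kset_iff_strict_mono:
  "sorted_kset {..<n} (d + 1) L \<longleftrightarrow>
     (\<exists>c. strict_mono_on {..d} c \<and> c d < n \<and> L = map c [0..<d + 1])"
proof
  assume L: "sorted_kset {..<n} (d + 1) L"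
  then have len: "length L = d + 1" and set: "set L \<subseteq> {..<n}" unfolding sorted_kset_def by auto
  have "strict_mono_on {..d} ((!) L)"
    using L unfolding strict_mono_on_def sorted_kset_def by (auto simp: sorted_wrt_iff_nth_less)
  moreover have "L ! d \<in> set L" using len by simp
  then have "L ! d < n" using set by blast
  moreover have "map ((!) L) [0..<length L] = L" by (rule map_nth)
  then have "L = map ((!) L) [0..<d + 1]" unfolding len ..
  ultimately show "\<exists>c. strict_mono_on {..d} c \<and> c d < n \<and> L = map c [0..<d + 1]" by blast
next
  assume "\<exists>c. strict_mono_on {..d} c \<and> c d < n \<and> L = map c [0..<d + 1]"
  then obtain c where c: "strict_mono_on {..d} c" "c d < n" and L: "L = map c [0..<d + 1]" by blast
  have "c i < n" if "i \<le> d" for i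
    using strict_mono_on_leD[OF c(1), of i d] c(2) that by simp
  moreover have "sorted_wrt (<) L"
    unfolding L sorted_wrt_iff_nth_less using c(1)
      by (auto simp: strict_mono_on_def simp del: upt_Suc)
  ultimately show "sorted_kset {..<n} (d + 1) L" unfolding sorted_kset_def L
    by (auto simp del: upt_Suc)
qed

lemma max_minors_pos_iff:
  fixes x :: "nat \<Rightarrow> real ^ 'd::finite"
  shows "(\<forall>c. strict_mono_on {..CARD('d)} c \<and> c CARD('d) < n \<longrightarrow> 0 < s * max_minor x c)
      \<longleftrightarrow> (\<forall>L. sorted_kset {..<n} (CARD('d) + 1) L \<longrightarrow> 0 < s * lifted_det x L)"
proof
  assume H: "\<forall>c. strict_mono_on {..CARD('d)} c \<and> c CARD('d) < n \<longrightarrow> 0 < s * max_minor x c"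
  show "\<forall>L. sorted_kset {..<n} (CARD('d) + 1) L \<longrightarrow> 0 < s * lifted_det x L"
  proof (intro allI impI)
    fix L assume "sorted_kset {..<n} (CARD('d) + 1) L"
    then obtain c where "strict_mono_on {..CARD('d)} c" "c CARD('d) < n"
      and L: "L = map c [0..<CARD('d) + 1]"
      unfolding sorted_kset_iff_strict_mono by blast
    then have "0 < s * max_minor x c" using H by blast
    then show "0 < s * lifted_det x L" unfolding L max_minor_eq_lifted_det .
  qed
next
  assume H: "\<forall>L. sorted_kset {..<n} (CARD('d) + 1) L \<longrightarrow> 0 < s * lifted_det x L"
  show "\<forall>c. strict_mono_on {..CARD('d)} c \<and> c CARD('d) < n \<longrightarrow> 0 < s * max_minor x c"
  proof (intro allI impI)
    fix c assume "strict_mono_on {..CARD('d)} c \<and> c CARD('d) < n"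
    then have "sorted_kset {..<n} (CARD('d) + 1) (map c [0..<CARD('d) + 1])"
      unfolding sorted_kset_iff_strict_mono by blast
    then show "0 < s * max_minor x c" using H unfolding max_minor_eq_lifted_det by blast
  qed
qed

lemma minors_same_sign_iff_sign_constant:
  "minors_same_sign n (x :: nat \<Rightarrow> real ^ 'd::finite) \<longleftrightarrow>
     sign_constant {..<n} (CARD('d) + 1) (lifted_det x)"
proof -
  let ?K = "CARD('d) + 1"
  note minors = max_minors_pos_iff[where x = x and n = n]
  show ?thesis
  proof
    assume "minors_same_sign n x"
    then obtain s :: real where s: "s \<in> {-1, 1}"
      "\<forall>c. strict_mono_on {..CARD('d)} c \<and> c CARD('d) < n \<longrightarrow> 0 < s * max_minor x c"
      unfolding minors_same_sign_def by blast
    from s(2) have pos: "\<forall>L. sorted_kset {..<n} ?K L \<longrightarrow> 0 < s * lifted_det x L"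
      unfolding minors .
    show "sign_constant {..<n} ?K (lifted_det x)"
      unfolding sign_constant_def
    proof (intro allI impI)
      fix L L' assume "sorted_kset {..<n} ?K L" "sorted_kset {..<n} ?K L'"
      then have "0 < (s * lifted_det x L) * (s * lifted_det x L')" using pos by simp
      also have "\<dots> = (s * s) * (lifted_det x L * lifted_det x L')" by (simp only: ac_simps)
      finally show "0 < lifted_det x L * lifted_det x L'" using s(1) by auto
    qed
  next
    assume const: "sign_constant {..<n} ?K (lifted_det x)"
    obtain s :: real where s: "s \<in> {-1, 1}" "\<forall>L. sorted_kset {..<n} ?K L \<longrightarrow> 0 < s * lifted_det x L"
    proof (cases "\<exists>L0. sorted_kset {..<n} ?K L0")
      case True
      then obtain L0 where L0: "sorted_kset {..<n} ?K L0" by blast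
      have "0 < (if 0 < lifted_det x L0 then 1 else -1) * lifted_det x L"
        if "sorted_kset {..<n} ?K L" for L
        using sign_constantD[OF const that L0] by (auto simp: zero_less_mult_iff)
      then show ?thesis using that[of "if 0 < lifted_det x L0 then 1 else -1"] by simp
    next
      case False
      then show ?thesis using that[of 1] by simp
    qed
    from s(2) have "\<forall>c. strict_mono_on {..CARD('d)} c \<and> c CARD('d) < n \<longrightarrow> 0 < s * max_minor x c"
      unfolding minors .
    then show "minors_same_sign n x" unfolding minors_same_sign_def using s(1) by blast
  qed
qed

lemma det_lift_affine:
  fixes cs :: "real Matrix.vec list"
  assumes "length cs = CARD('d::finite)"
  obtains a :: "real ^ 'd" and \<alpha> where "\<And>z. det_cols (CARD('d) + 1) (cs @ [lift z]) = a \<bullet> z + \<alpha>"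
proof -
  let ?d = "CARD('d)"
  define e where "e = (coord_enum :: nat \<Rightarrow> 'd)"
  have e: "bij_betw e {..<?d} UNIV" unfolding e_def by (rule coord_enum_bij)
  obtain C where C: "\<And>b :: real Matrix.vec.
      det_cols (?d + 1) ((cs @ [lift 0])[?d := b]) = (\<Sum>i<?d + 1. b $ i * C i)"
    using det_cols_linear[of "cs @ [lift 0]" "?d + 1" ?d] assms by auto
  have upd: "(cs @ [lift 0])[?d := b] = cs @ [b]" for b using assms
    by (simp add: list_update_append)
  define a :: "real ^ 'd" where "a = (\<chi> l. C (Suc (inv_into {..<?d} e l)))"
  have "det_cols (?d + 1) (cs @ [lift z]) = a \<bullet> z + C 0" for z :: "real ^ 'd"
  proof -
    have "det_cols (?d + 1) (cs @ [lift z]) = (\<Sum>i<Suc ?d. lift z $ i * C i)"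
      using C[of "lift z"] unfolding upd by simp
    also have "\<dots> = C 0 + (\<Sum>r<?d. z $ e r * C (Suc r))"
      by (simp only: sum.lessThan_Suc_shift) (simp add: lift_Suc e_def)
    also have "(\<Sum>r<?d. z $ e r * C (Suc r)) = (\<Sum>r<?d. z $ e r * a $ e r)"
      by (rule sum.cong) (simp_all add: a_def inv_into_f_f bij_betw_imp_inj_on[OF e])
    also have "\<dots> = (\<Sum>l\<in>UNIV. z $ l * a $ l)" by (rule sum.reindex_bij_betw[OF e])
    also have "\<dots> = a \<bullet> z" by (simp add: inner_vec_def mult.commute)
    finally show ?thesis by simp
  qed
  then show ?thesis using that by blast
qed

text \<open>By Cramer's rule a zero of the determinant is an affine combination of the points \<open>ys\<close>.\<close>
lemma det_lift_zero_in_hyperplane: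
  fixes ys :: "(real ^ 'd::finite) list" and c z :: "real ^ 'd"
  assumes "length ys = CARD('d)" "\<forall>y\<in>set ys. c \<bullet> y = b"
    and nonzero: "det_cols (CARD('d) + 1) (map lift ys @ [lift w]) \<noteq> 0"
    and zero: "det_cols (CARD('d) + 1) (map lift ys @ [lift z]) = 0"
  shows "c \<bullet> z = b"
proof -
  let ?d = "CARD('d)" and ?K = "CARD('d) + 1"
  define cs where "cs = map lift ys @ [lift w]"
  have lcs: "length cs = ?K" using assms(1) by (simp add: cs_def)
  obtain v where v: "v \<in> carrier_vec ?K" "cols_mat ?K cs *\<^sub>v v = lift z"
    using det_cols_solve[OF nonzero[folded cs_def] lift_carrier] by blast
  have "cs[?d := lift z] = map lift ys @ [lift z]" unfolding cs_def using assms(1)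
    by (simp add: list_update_append)
  then have "v $ ?d * det_cols ?K cs = 0"
    using det_cols_cramer[OF lcs _ v(1), of ?d] zero unfolding v(2) by simp
  then have vd: "v $ ?d = 0" using nonzero cs_def by simp
  have comb: "lift z $ r = (\<Sum>j<?d. v $ j * lift (ys ! j) $ r)" if "r < ?K" for r
  proof -
    have "lift z $ r = (cols_mat ?K cs *\<^sub>v v) $ r" using v(2) by simp
    also have "\<dots> = (\<Sum>j<?K. (cs ! j) $ r * v $ j)" by (rule cols_mat_mult_vec[OF v(1) that])
    also have "\<dots> = (\<Sum>j<?d. v $ j * lift (ys ! j) $ r)"
      using vd assms(1) by (simp add: cs_def nth_append mult.commute)
    finally show ?thesis .
  qed
  have z: "z = (\<Sum>j<?d. v $ j *\<^sub>R ys ! j)"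
  proof (rule Finite_Cartesian_Product.vec_eq_iff[THEN iffD2], rule allI)
    fix l :: 'd
    obtain r where r: "r < ?d" "coord_enum r = l"
      using coord_enum_bij[where 'd = 'd]
        by (metis bij_betw_iff_bijections iso_tuple_UNIV_I lessThan_iff)
    show "z $ l = (\<Sum>j<?d. v $ j *\<^sub>R ys ! j) $ l"
      using comb[of "Suc r"] r by (simp add: lift_Suc sum_component)
  qed
  have "(\<Sum>j<?d. v $ j) = 1" using comb[of 0] by simp
  moreover have "c \<bullet> ys ! j = b" if "j < ?d" for j using assms(1,2) that by simp
  ultimately show ?thesis unfolding z by (simp add: inner_sum_right sum_distrib_right[symmetric])
qed

lemma det_lift_same_side:
  fixes ys :: "(real ^ 'd::finite) list" and c z1 z2 :: "real ^ 'd"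
  assumes "length ys = CARD('d)" "\<forall>y\<in>set ys. c \<bullet> y = b" "c \<bullet> z1 < b" "c \<bullet> z2 < b"
    and nonzero: "det_cols (CARD('d) + 1) (map lift ys @ [lift z1]) \<noteq> 0"
  shows "0 < det_cols (CARD('d) + 1) (map lift ys @ [lift z1])
           * det_cols (CARD('d) + 1) (map lift ys @ [lift z2])"
proof (rule ccontr)
  let ?\<phi> = "\<lambda>z. det_cols (CARD('d) + 1) (map lift ys @ [lift z])"
  obtain a :: "real ^ 'd" and \<alpha> where \<phi>: "\<And>z. ?\<phi> z = a \<bullet> z + \<alpha>"
    using det_lift_affine[where 'd = 'd, of "map lift ys"] assms(1) by auto
  define p1 where "p1 = ?\<phi> z1"
  define p2 where "p2 = ?\<phi> z2"
  assume "\<not> 0 < ?\<phi> z1 * ?\<phi> z2"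
  then have signs: "(0 < p1 \<and> p2 \<le> 0) \<or> (p1 < 0 \<and> 0 \<le> p2)"
    using nonzero unfolding p1_def p2_def by (auto simp: not_less mult_le_0_iff)
  define t where "t = p1 / (p1 - p2)"
  have "p1 - p2 \<noteq> 0" and t: "0 < t" "t \<le> 1"
    using signs unfolding t_def by (auto simp: zero_less_divide_iff divide_le_eq_1)
  define z where "z = (1 - t) *\<^sub>R z1 + t *\<^sub>R z2"
  have "?\<phi> z = (1 - t) * p1 + t * p2" unfolding z_def p1_def p2_def \<phi> by (simp add: algebra_simps)
  also have "\<dots> = p1 - t * (p1 - p2)" by (simp add: algebra_simps)
  also have "\<dots> = 0" using \<open>p1 - p2 \<noteq> 0\<close> by (simp add: t_def)
  finally have "?\<phi> z = 0" .
  then have "c \<bullet> z = b" using det_lift_zero_in_hyperplane[OF assms(1,2) nonzero] by blast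
  moreover have "c \<bullet> z < b"
  proof -
    have "c \<bullet> z = (1 - t) * (c \<bullet> z1) + t * (c \<bullet> z2)" unfolding z_def by (simp add: inner_add_right)
    also have "\<dots> < (1 - t) * b + t * b"
    proof (rule add_le_less_mono)
      show "(1 - t) * (c \<bullet> z1) \<le> (1 - t) * b"
        using assms(3) t by (intro mult_left_mono) auto
      show "t * (c \<bullet> z2) < t * b"
        using assms(4) t by (intro mult_strict_left_mono) auto
    qed
    finally show ?thesis by (simp add: algebra_simps)
  qed
  ultimately show False by simp
qed

section \<open>Exposed subsets of finite point sets\<close>

definition exposed_subset :: "'a::real_inner set \<Rightarrow> 'a set \<Rightarrow> bool" where
  "exposed_subset X Y \<longleftrightarrow> (\<exists>c b. (\<forall>y\<in>X. c \<bullet> y \<le> b) \<and> Y = {y\<in>X. c \<bullet> y = b})"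

lemma convex_hull_supporting_face:
  fixes X :: "'a::euclidean_space set"
  assumes "\<forall>y\<in>X. c \<bullet> y \<le> b"
  shows "convex hull X \<inter> {z. c \<bullet> z = b} face_of convex hull X"
proof -
  have "convex hull X \<subseteq> {z. c \<bullet> z \<le> b}"
    using assms by (intro hull_minimal) (auto simp: convex_halfspace_le)
  then show ?thesis by (intro face_of_Int_supporting_hyperplane_le) auto
qed

lemma exposed_subset_face_of:
  fixes X :: "'a::euclidean_space set"
  assumes "exposed_subset X Y"
  shows "\<exists>F. F face_of convex hull X \<and> F \<inter> X = Y"
proof -
  obtain c b where cb: "\<forall>y\<in>X. c \<bullet> y \<le> b" "Y = {y\<in>X. c \<bullet> y = b}"
    using assms unfolding exposed_subset_def by blast
  have "(convex hull X \<inter> {z. c \<bullet> z = b}) \<inter> X = Y" using cb(2) hull_subset[of X convex] by auto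
  then show ?thesis using convex_hull_supporting_face[OF cb(1)] by blast
qed

lemma face_of_convex_hull_exposed_subset:
  fixes X :: "'a::euclidean_space set"
  assumes "finite X" "F face_of convex hull X"
  shows "exposed_subset X (F \<inter> X)"
proof -
  have "polyhedron (convex hull X)" using polytope_convex_hull[OF assms(1)]
    by (rule polytope_imp_polyhedron)
  then have "F exposed_face_of convex hull X" using assms(2) exposed_face_of_polyhedron by blast
  then obtain c b where "convex hull X \<subseteq> {z. c \<bullet> z \<le> b}" "F = convex hull X \<inter> {z. c \<bullet> z = b}"
    unfolding exposed_face_of_def by blast
  then show ?thesis unfolding exposed_subset_def using hull_subset[of X convex] by blast
qed

lemma comb_automorphism_exposed_subset:
  fixes X :: "'a::euclidean_space set"
  assumes "finite X" "vertices_of (convex hull X) = X" "comb_automorphism (convex hull X) \<sigma>"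
    and "exposed_subset X Y"
  shows "exposed_subset X (\<sigma> ` Y)"
proof -
  have "Y \<subseteq> X" using assms(4) unfolding exposed_subset_def by blast
  moreover have "\<exists>F. F face_of convex hull X \<and> F \<inter> X = Y"
    by (rule exposed_subset_face_of[OF assms(4)])
  moreover have "(\<exists>F. F face_of convex hull X \<and> F \<inter> X = Y) \<longleftrightarrow>
      (\<exists>G. G face_of convex hull X \<and> G \<inter> X = \<sigma> ` Y)"
    using assms(3) \<open>Y \<subseteq> X\<close> unfolding comb_automorphism_def assms(2) by blast
  ultimately obtain G where G: "G face_of convex hull X" "G \<inter> X = \<sigma> ` Y" by blast
  show ?thesis using face_of_convex_hull_exposed_subset[OF assms(1) G(1)] unfolding G(2) .
qed

lemma exposed_subset_hull_remove:
  fixes X :: "'a::euclidean_space set"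
  assumes "finite X" "exposed_subset X Y" "a \<in> Y" "a \<in> convex hull (X - {a})"
  shows "a \<in> convex hull (Y - {a})"
proof -
  obtain c b where cb: "\<forall>y\<in>X. c \<bullet> y \<le> b" "Y = {y\<in>X. c \<bullet> y = b}"
    using assms(2) unfolding exposed_subset_def by blast
  let ?Q = "convex hull (X - {a})"
  have "?Q \<inter> {z. c \<bullet> z = b} face_of ?Q" using cb(1) by (intro convex_hull_supporting_face) auto
  moreover have "compact (X - {a})" using assms(1) by (simp add: finite_imp_compact)
  ultimately obtain S where S: "S \<subseteq> X - {a}" "?Q \<inter> {z. c \<bullet> z = b} = convex hull S"
    using face_of_convex_hull_subset by metis
  have "S \<subseteq> Y - {a}" using S cb(2) hull_subset[of S convex] by auto
  moreover have "a \<in> convex hull S" using S(2) assms(3,4) cb(2) by auto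
  ultimately show ?thesis using hull_mono by blast
qed

section \<open>Configurations with all maximal minors of one sign\<close>

context
  fixes x :: "nat \<Rightarrow> real ^ 'd::finite" and n :: nat
  assumes alternating: "sign_constant {..<n} (CARD('d) + 1) (lifted_det x)"
    and n_ge: "CARD('d) + 1 \<le> n"
begin

lemma lifted_det_nonzero:
  assumes "distinct L" "set L \<subseteq> {..<n}" "length L = CARD('d) + 1"
  shows "lifted_det x L \<noteq> 0"
proof -
  have "sorted_kset {..<n} (CARD('d) + 1) (sort L)"
    using assms unfolding sorted_kset_def by (simp add: strict_sorted_iff)
  then have "lifted_det x (sort L) \<noteq> 0" using sign_constantD[OF alternating] by fastforce
  then show ?thesis using alternating_gp_abs_sort[OF alternating_gp_lifted_det[of x] assms(3)]
    by auto
qed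

lemma inj_on_alternating: "inj_on x {..<n}"
proof (rule inj_onI, rule ccontr)
  fix i j assume ij: "i \<in> {..<n}" "j \<in> {..<n}" "x i = x j" "i \<noteq> j"
  have "card {i, j} \<le> CARD('d) + 1" using ij(4) by simp
  then obtain L where L: "sorted_kset {..<n} (CARD('d) + 1) L" "{i, j} \<subseteq> set L"
    using sorted_kset_superset[of "{..<n}" "{i, j}"] ij(1,2) n_ge by auto
  obtain p q where pq: "p < length L" "L ! p = i" "q < length L" "L ! q = j"
    using L(2) by (auto simp: in_set_conv_nth)
  have "lifted_det x L = 0" unfolding lifted_det_def
    by (rule det_cols_repeated[of _ _ p q]) (use L(1) pq ij in \<open>auto simp: sorted_kset_def\<close>)
  then show False using sign_constantD[OF alternating L(1) L(1)] by simp
qed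

lemma pair_union_exposed:
  assumes "pair_union {..<n} S" "card S = CARD('d)"
  shows "exposed_subset (x ` {..<n}) (x ` S)"
proof -
  let ?K = "CARD('d) + 1"
  have S: "S \<subseteq> {..<n}" using pair_union_subset[OF assms(1)] .
  obtain L where L: "sorted_wrt (<) L" "set L = S" "length L = CARD('d)"
    using finite_set_strict_sorted[of S] finite_subset[OF S] assms(2) by auto
  define r where "r = lifted_det x [0..<?K]"
  have ref: "sorted_kset {..<n} ?K [0..<?K]" using n_ge unfolding sorted_kset_def
    by (auto simp del: upt_Suc)
  have pos: "0 < r * lifted_det x M" if "sorted_kset {..<n} ?K M" for M
    using sign_constantD[OF alternating that ref] unfolding r_def by (simp only: mult.commute)
  obtain a :: "real ^ 'd" and \<alpha>
    where a: "\<And>z. det_cols ?K (map lift (map x L) @ [lift z]) = a \<bullet> z + \<alpha>"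
    using det_lift_affine[of "map lift (map x L)"] L(3) by auto
  have off: "0 < r * (a \<bullet> x j + \<alpha>)" if "j < n" "j \<notin> S" for j
    using pair_union_sign[OF assms(1) alternating_gp_lifted_det pos L(1,2)] that L(3)
    unfolding lifted_det_snoc a by auto
  have on: "a \<bullet> x s + \<alpha> = 0" if s: "s \<in> S" for s
  proof -
    obtain p where "p < length L" "L ! p = s" using s L(2) by (auto simp: in_set_conv_nth)
    then have "lifted_det x (L @ [s]) = 0" unfolding lifted_det_def
      by (intro det_cols_repeated[of _ _ p "length L"]) (use L(3) in \<open>auto simp: nth_append\<close>)
    then show ?thesis unfolding lifted_det_snoc a .
  qed
  define c where "c = - (r *\<^sub>R a)"
  have c: "c \<bullet> z = - (r * (a \<bullet> z + \<alpha>)) + r * \<alpha>" for z by (simp add: c_def algebra_simps)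
  have side: "c \<bullet> x j \<le> r * \<alpha> \<and> (c \<bullet> x j = r * \<alpha> \<longleftrightarrow> j \<in> S)" if "j < n" for j
    using off[OF that] on unfolding c by (cases "j \<in> S") auto
  have "\<forall>y\<in>x ` {..<n}. c \<bullet> y \<le> r * \<alpha>" using side by auto
  moreover have "x ` S = {y \<in> x ` {..<n}. c \<bullet> y = r * \<alpha>}" using side S by auto
  ultimately show ?thesis unfolding exposed_subset_def by blast
qed

lemma not_in_convex_hull_of_fewer:
  assumes "T \<subseteq> {..<n}" "card T < CARD('d)" "i < n" "i \<notin> T"
  shows "x i \<notin> convex hull (x ` T)"
proof
  assume i: "x i \<in> convex hull (x ` T)"
  have "T \<subseteq> {..<n} - {i}" "card T \<le> CARD('d)" "CARD('d) \<le> card ({..<n} - {i})"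
    using assms n_ge by auto
  then obtain M where M: "sorted_kset ({..<n} - {i}) CARD('d) M" "T \<subseteq> set M"
    using sorted_kset_superset[of "{..<n} - {i}" T "CARD('d)"] by blast
  obtain a :: "real ^ 'd" and \<alpha>
    where a: "\<And>z. det_cols (CARD('d) + 1) (map lift (map x M) @ [lift z]) = a \<bullet> z + \<alpha>"
    using det_lift_affine[of "map lift (map x M)"] M(1) unfolding sorted_kset_def by auto
  have "a \<bullet> x t = - \<alpha>" if t: "t \<in> T" for t
  proof -
    have "t \<in> set M" using t M(2) by blast
    then obtain p where "p < length M" "M ! p = t" by (metis in_set_conv_nth)
    then have "lifted_det x (M @ [t]) = 0" unfolding lifted_det_def
      by (intro det_cols_repeated[of _ _ p "length M"])
        (use M(1) in \<open>auto simp: nth_append sorted_kset_def\<close>)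
    then show ?thesis unfolding lifted_det_snoc a by simp
  qed
  then have "convex hull (x ` T) \<subseteq> {z. a \<bullet> z = - \<alpha>}"
    by (intro hull_minimal) (auto simp: convex_hyperplane)
  then have "lifted_det x (M @ [i]) = 0" using i unfolding lifted_det_snoc a by auto
  moreover have "lifted_det x (M @ [i]) \<noteq> 0"
    using M(1) assms(3) by (intro lifted_det_nonzero) (auto simp: sorted_kset_def strict_sorted_iff)
  ultimately show False by contradiction
qed

lemma vertices_of_alternating:
  assumes "even CARD('d)"
  shows "vertices_of (convex hull (x ` {..<n})) = x ` {..<n}"
proof -
  let ?d = "CARD('d)" and ?X = "x ` {..<n}"
  have "a \<notin> convex hull (?X - {a})" if a: "a \<in> ?X" for a
  proof
    assume hull: "a \<in> convex hull (?X - {a})"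
    obtain i where i: "i < n" "a = x i" using a by auto
    define a0 where "a0 = (if i + ?d \<le> n then i else n - ?d)"
    define S where "S = {a0..<a0 + ?d}"
    have S: "S \<subseteq> {..<n}" "i \<in> S" "card S = ?d"
      using i(1) n_ge unfolding S_def a0_def by auto
    have "pair_union {..<n} S"
      using pair_union_interval[of a0 "?d div 2" "{..<n}"] S(1) assms unfolding S_def by simp
    then have "a \<in> convex hull (x ` S - {a})"
      using exposed_subset_hull_remove[OF _ pair_union_exposed _ hull] S i by auto
    moreover have "x ` S - {a} = x ` (S - {i})"
      using inj_on_alternating S(1) i by (auto dest: inj_onD)
    moreover have "card (S - {i}) < ?d" using S by (simp add: card_Diff_singleton)
    ultimately show False using not_in_convex_hull_of_fewer[of "S - {i}" i] S i by auto
  qed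
  then have "v extreme_point_of convex hull ?X \<longleftrightarrow> v \<in> ?X" for v
    using extreme_point_of_convex_hull_convex_independent[of ?X] by (simp add: finite_imp_compact)
  then show ?thesis unfolding vertices_of_def by simp
qed

lemma permuted_pair_union_supported:
  assumes "even CARD('d)" "\<pi> permutes {..<n}"
    and "comb_automorphism (convex hull (x ` {..<n})) \<sigma>" "\<forall>i<n. \<sigma> (x i) = x (\<pi> i)"
    and "pair_union {..<n} S" "card S = CARD('d)"
  obtains c b where "\<forall>s\<in>S. c \<bullet> x (\<pi> s) = b" "\<forall>t\<in>{..<n} - S. c \<bullet> x (\<pi> t) < b"
proof -
  let ?X = "x ` {..<n}"
  have S: "S \<subseteq> {..<n}" using pair_union_subset[OF assms(5)] .
  have \<pi>: "\<pi> t < n" if "t < n" for t using permutes_in_image[OF assms(2)] that by simp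
  have "exposed_subset ?X (\<sigma> ` x ` S)"
    using comb_automorphism_exposed_subset[OF _ vertices_of_alternating[OF assms(1)] assms(3)]
      pair_union_exposed[OF assms(5,6)] by simp
  moreover have "\<sigma> ` x ` S = x ` \<pi> ` S"
    unfolding image_image using assms(4) S by (intro image_cong) auto
  ultimately obtain c b where cb: "\<forall>y\<in>?X. c \<bullet> y \<le> b" "x ` \<pi> ` S = {y\<in>?X. c \<bullet> y = b}"
    unfolding exposed_subset_def by auto
  have off: "\<forall>t\<in>{..<n} - S. c \<bullet> x (\<pi> t) < b"
  proof
    fix t assume t: "t \<in> {..<n} - S"
    have "x (\<pi> t) \<notin> x ` \<pi> ` S"
    proof
      assume "x (\<pi> t) \<in> x ` \<pi> ` S"
      then obtain s where s: "s \<in> S" "x (\<pi> t) = x (\<pi> s)" by blast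
      then have "\<pi> t = \<pi> s" using inj_onD[OF inj_on_alternating] \<pi> t S by blast
      then have "t = s" using inj_onD[OF permutes_inj_on[OF assms(2)]] t S s(1) by blast
      then show False using t s(1) by simp
    qed
    moreover have "x (\<pi> t) \<in> ?X" using \<pi> t by simp
    ultimately have "c \<bullet> x (\<pi> t) \<noteq> b" using cb(2) by blast
    moreover have "c \<bullet> x (\<pi> t) \<le> b" using cb(1) \<open>x (\<pi> t) \<in> ?X\<close> by blast
    ultimately show "c \<bullet> x (\<pi> t) < b" by simp
  qed
  have on: "\<forall>s\<in>S. c \<bullet> x (\<pi> s) = b"
  proof
    fix s assume "s \<in> S"
    then have "x (\<pi> s) \<in> x ` \<pi> ` S" by blast
    then show "c \<bullet> x (\<pi> s) = b" unfolding cb(2) by simp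
  qed
  show ?thesis by (rule that[OF on off])
qed

lemma pair_unions_are_facets_permuted:
  assumes "even CARD('d)" "\<pi> permutes {..<n}"
    and "comb_automorphism (convex hull (x ` {..<n})) \<sigma>" "\<forall>i<n. \<sigma> (x i) = x (\<pi> i)"
  shows "pair_unions_are_facets {..<n} (CARD('d) + 1) (lifted_det (x \<circ> \<pi>))"
  unfolding pair_unions_are_facets_def
proof (intro allI impI)
  fix S L j j'
  assume S: "pair_union {..<n} S"
    and L: "sorted_wrt (<) L" "set L = S" "length L + 1 = CARD('d) + 1"
    and j: "j \<in> {..<n} - S" "j' \<in> {..<n} - S"
  have "card S = CARD('d)" using L distinct_card[of L] by (simp add: strict_sorted_iff)
  then obtain c b where on: "\<forall>s\<in>S. c \<bullet> x (\<pi> s) = b" and off: "\<forall>t\<in>{..<n} - S. c \<bullet> x (\<pi> t) < b"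
    using permuted_pair_union_supported[OF assms S] by blast
  have "set (L @ [j]) \<subseteq> {..<n}" using L(2) pair_union_subset[OF S] j by auto
  moreover have "distinct (L @ [j])" using L(1,2) j by (simp add: strict_sorted_iff)
  ultimately have "distinct (map \<pi> (L @ [j]))" "set (map \<pi> (L @ [j])) \<subseteq> {..<n}"
    using inj_on_subset[OF permutes_inj_on[OF assms(2)]] permutes_in_image[OF assms(2)]
    by (auto simp: distinct_map)
  then have "lifted_det x (map \<pi> (L @ [j])) \<noteq> 0" using L(3) by (intro lifted_det_nonzero) auto
  then have "det_cols (CARD('d) + 1) (map lift (map (x \<circ> \<pi>) L) @ [lift (x (\<pi> j))]) \<noteq> 0"
    by (simp add: lifted_det_def comp_assoc)
  moreover have "\<forall>y\<in>set (map (x \<circ> \<pi>) L). c \<bullet> y = b" using on L(2) by auto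
  ultimately have "0 < det_cols (CARD('d) + 1) (map lift (map (x \<circ> \<pi>) L) @ [lift (x (\<pi> j))])
      * det_cols (CARD('d) + 1) (map lift (map (x \<circ> \<pi>) L) @ [lift (x (\<pi> j'))])"
    using det_lift_same_side[where ys = "map (x \<circ> \<pi>) L",
        OF _ _ off[rule_format, OF j(1)] off[rule_format, OF j(2)]] L(3)
    by simp
  then show "0 < lifted_det (x \<circ> \<pi>) (L @ [j]) * lifted_det (x \<circ> \<pi>) (L @ [j'])"
    unfolding lifted_det_snoc by simp
qed

end

theorem corollary3p11:
  fixes x :: "nat \<Rightarrow> real ^ 'd" and n :: nat and \<pi> :: "nat \<Rightarrow> nat"
  assumes "even (CARD('d))"
    and "n \<ge> CARD('d) + 1"
    and "minors_same_sign n x"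
    and "\<pi> permutes {..<n}"
    and "\<exists>\<sigma>. comb_automorphism (convex hull (x ` {..<n})) \<sigma> \<and> (\<forall>i<n. \<sigma> (x i) = x (\<pi> i))"
  shows "minors_same_sign n (x \<circ> \<pi>)"
proof -
  have alternating: "sign_constant {..<n} (CARD('d) + 1) (lifted_det x)"
    using assms(3) by (simp add: minors_same_sign_iff_sign_constant)
  obtain \<sigma> where \<sigma>: "comb_automorphism (convex hull (x ` {..<n})) \<sigma>" "\<forall>i<n. \<sigma> (x i) = x (\<pi> i)"
    using assms(5) by blast
  define m where "m = CARD('d) div 2"
  have K: "CARD('d) + 1 = 2 * m + 1" using assms(1) by (simp add: m_def)
  have "pair_unions_are_facets {..<n} (2 * m + 1) (lifted_det (x \<circ> \<pi>))"
    using pair_unions_are_facets_permuted[OF alternating assms(2,1,4) \<sigma>] unfolding K .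
  then have "sign_constant {..<n} (2 * m + 1) (lifted_det (x \<circ> \<pi>))"
    by (rule sign_constant_if_pair_unions_are_facets
        [OF alternating_gp_lifted_det[of "x \<circ> \<pi>", unfolded K] finite_lessThan])
  then show ?thesis unfolding minors_same_sign_iff_sign_constant K .
qed
end
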